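(* Under the assumptions on $\Psi$ stated in the context, let $T\in(0,\infty]$, let $g^{in}\in L^1_{-2\beta,1}(0,\infty)$ be non-negative, let $g$ be a weak solution on $[0,T)$, and let $t\in(0,T)$. Then (i) for every $q\in(0,\infty)$, $\int_q^\infty[g(\zeta,t)-g^{in}(\zeta)]d\zeta=-\frac12\int_0^t\int_q^\infty\int_q^\infty\Psi(\zeta,\eta)g(\zeta,s)g(\eta,s)d\eta d\zeta ds+\frac12\int_0^t\int_0^q\int_{q-\zeta}^q\Psi(\zeta,\eta)g(\zeta,s)g(\eta,s)d\eta d\zeta ds;$ (ii) $\lim_{q\to\infty}\int_0^t q\Big[\int_0^q\int_{q-\zeta}^q\Psi(\zeta,\eta)g(\zeta,s)g(\eta,s)d\eta d\zeta-\int_q^\infty\int_q^\infty\Psi(\zeta,\eta)g(\zeta,s)g(\eta,s)d\eta d\zeta\Big]ds=0.$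
   Context: $\Psi:(0,\infty)^2\to[0,\infty)$ is measurable and symmetric and there are $\beta>0$, $k>0$ with $\Psi(\zeta,\eta)\le k(\zeta\eta)^{-\beta}$ on $(0,1)^2$, $\Psi(\zeta,\eta)\le k\eta\zeta^{-\beta}$ on $(0,1)\times(1,\infty)$, and $\Psi(\zeta,\eta)\le k(\zeta+\eta)$ on $(1,\infty)^2$. $L^1_{-2\beta,1}(0,\infty):=L^1((0,\infty);(\zeta^{-2\beta}+\zeta)d\zeta)$. A weak solution on $[0,T)$ is a non-negative $g\in\mathcal{C}([0,T);L^1(0,\infty))\cap L^\infty(0,T;L^1_{-2\beta,1}(0,\infty))$ such that for every $t\in(0,T)$ and $\omega\in L^\infty(0,\infty)$, $\int_0^\infty[g(\zeta,t)-g^{in}(\zeta)]\omega(\zeta)d\zeta=\frac12\int_0^t\int_0^\infty\int_0^\infty[\omega(\zeta+\eta)-\omega(\zeta)-\omega(\eta)]\Psi(\zeta,\eta)g(\zeta,s)g(\eta,s)d\eta d\zeta ds$. *)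

theory Defs
  imports "HOL-Analysis.Analysis"
begin

definition kernel_assms :: "(real \<Rightarrow> real \<Rightarrow> real) \<Rightarrow> real \<Rightarrow> real \<Rightarrow> bool" where
  "kernel_assms Psi \<beta> k \<longleftrightarrow>
     \<beta> > 0 \<and> k > 0 \<and>
     set_borel_measurable borel ({0<..} \<times> {0<..}) (\<lambda>(z, e). Psi z e) \<and>
     (\<forall>z>0. \<forall>e>0. Psi z e \<ge> 0 \<and> Psi z e = Psi e z) \<and>
     (\<forall>z e. 0 < z \<and> z < 1 \<and> 0 < e \<and> e < 1 \<longrightarrow> Psi z e \<le> k * (z * e) powr (- \<beta>)) \<and>
     (\<forall>z e. 0 < z \<and> z < 1 \<and> 1 < e \<longrightarrow> Psi z e \<le> k * e * z powr (- \<beta>)) \<and>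
     (\<forall>z e. 1 < z \<and> 1 < e \<longrightarrow> Psi z e \<le> k * (z + e))"

definition in_L1w :: "real \<Rightarrow> (real \<Rightarrow> real) \<Rightarrow> bool" where
  "in_L1w \<beta> f \<longleftrightarrow> f \<in> borel_measurable lborel \<and>
     set_integrable lborel {0<..} (\<lambda>x. f x * (x powr (-2 * \<beta>) + x))"

definition wnorm :: "real \<Rightarrow> (real \<Rightarrow> real) \<Rightarrow> real" where
  "wnorm \<beta> f = (\<integral>x\<in>{0<..}. \<bar>f x\<bar> * (x powr (-2 * \<beta>) + x) \<partial>lborel)"

text \<open>Weak solution on [0,T): g z s is the value at size z and time s.\<close>
definition weak_solution ::
  "(real \<Rightarrow> real \<Rightarrow> real) \<Rightarrow> real \<Rightarrow> ereal \<Rightarrow> (real \<Rightarrow> real) \<Rightarrow> (real \<Rightarrow> real \<Rightarrow> real) \<Rightarrow> bool" where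
  "weak_solution Psi \<beta> T gin g \<longleftrightarrow>
     (\<lambda>(z, s). g z s) \<in> borel_measurable borel \<and>
     (\<forall>s z. 0 \<le> s \<and> ereal s < T \<and> 0 < z \<longrightarrow> g z s \<ge> 0) \<and>
     (\<forall>s. 0 \<le> s \<and> ereal s < T \<longrightarrow> set_integrable lborel {0<..} (\<lambda>z. g z s)) \<and>
     (\<forall>s0. 0 \<le> s0 \<and> ereal s0 < T \<longrightarrow>
        ((\<lambda>s. \<integral>z\<in>{0<..}. \<bar>g z s - g z s0\<bar> \<partial>lborel) \<longlongrightarrow> 0)
          (at s0 within {s. 0 \<le> s \<and> ereal s < T})) \<and>
     (\<forall>s. 0 \<le> s \<and> ereal s < T \<longrightarrow> in_L1w \<beta> (\<lambda>z. g z s)) \<and>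
     (\<exists>C. \<forall>s. 0 \<le> s \<and> ereal s < T \<longrightarrow> wnorm \<beta> (\<lambda>z. g z s) \<le> C) \<and>
     (\<forall>t \<omega>. 0 < t \<and> ereal t < T \<and> \<omega> \<in> borel_measurable borel \<and> (\<exists>M. \<forall>x>0. \<bar>\<omega> x\<bar> \<le> M) \<longrightarrow>
        (\<integral>z\<in>{0<..}. (g z t - gin z) * \<omega> z \<partial>lborel) =
        1/2 * (\<integral>s\<in>{0..t}. (\<integral>z\<in>{0<..}. (\<integral>e\<in>{0<..}.
           (\<omega> (z + e) - \<omega> z - \<omega> e) * Psi z e * g z s * g e s \<partial>lborel) \<partial>lborel) \<partial>lborel))"

end

theory Submission
  imports Defs
begin

(* Testing the weak formulation with the bounded function \<omega> = indicator of [q, \<infinity>) gives (i):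
   \<omega>(z + e) - \<omega>(z) - \<omega>(e) is 1 on pairs below q whose sum reaches q, -1 on pairs above q,
   and 0 otherwise.  Since \<Psi>(z, e) \<le> k \<phi>(z) \<phi>(e) with \<phi>(z) = z^(-\<beta>) + z + 1, both pair
   integrals are bounded by k (\<integral> \<phi> g)^2, uniformly in time by the weighted L^1 bound, hence
   integrable over [0, t].  By (i) the integral in (ii) equals 2 q \<integral>_q^\<infinity> (g(t) - g^in), which
   is dominated by \<integral>_q^\<infinity> z |g(t) - g^in| \<rightarrow> 0. *)

definition kernel_weight :: "real \<Rightarrow> real \<Rightarrow> real" where
  "kernel_weight \<beta> x = x powr (-\<beta>) + x + 1"

lemma kernel_weight_ge_1: "0 \<le> x \<Longrightarrow> 1 \<le> kernel_weight \<beta> x"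
  unfolding kernel_weight_def by auto

lemma kernel_weight_le:
  assumes "\<beta> > 0" "x > 0"
  shows "kernel_weight \<beta> x \<le> 3 * (x powr (-2*\<beta>) + x)"
proof (cases "x < 1")
  case True
  have "x powr (-\<beta>) \<le> x powr (-2*\<beta>)"
    using assms True by (intro powr_mono') auto
  moreover have "1 \<le> x powr (-2*\<beta>)"
    using assms True by (simp add: powr_minus_divide less_imp_le powr_le1)
  ultimately show ?thesis using assms unfolding kernel_weight_def by auto
next
  case False
  then have "x powr (-\<beta>) \<le> 1"
    using assms by (simp add: powr_minus_divide ge_one_powr_ge_zero)
  moreover have "0 \<le> x powr (-2*\<beta>)" by simp
  moreover have "3 * (x powr (-2*\<beta>) + x) = 3 * x powr (-2*\<beta>) + 3 * x" by simp
  ultimately show ?thesis using False unfolding kernel_weight_def by linarith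
qed

text \<open>The kernel assumptions say nothing on the lines \<open>z = 1\<close> and \<open>e = 1\<close>.\<close>

lemma kernel_le_kernel_weight:
  assumes K: "kernel_assms Psi \<beta> k" and z: "0 < z" "z \<noteq> 1" and e: "0 < e" "e \<noteq> 1"
  shows "Psi z e \<le> k * kernel_weight \<beta> z * kernel_weight \<beta> e"
proof -
  from K have kpos: "k > 0" and sym: "Psi z e = Psi e z"
    and small: "\<And>z e. 0 < z \<and> z < 1 \<and> 0 < e \<and> e < 1 \<Longrightarrow> Psi z e \<le> k * (z * e) powr (- \<beta>)"
    and mixed: "\<And>z e. 0 < z \<and> z < 1 \<and> 1 < e \<Longrightarrow> Psi z e \<le> k * e * z powr (- \<beta>)"
    and large: "\<And>z e. 1 < z \<and> 1 < e \<Longrightarrow> Psi z e \<le> k * (z + e)"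
    using z e unfolding kernel_assms_def by auto
  have w: "z powr (-\<beta>) \<le> kernel_weight \<beta> z" "z \<le> kernel_weight \<beta> z" "0 \<le> z powr (-\<beta>)"
          "e powr (-\<beta>) \<le> kernel_weight \<beta> e" "e \<le> kernel_weight \<beta> e" "0 \<le> e powr (-\<beta>)"
    using z e by (auto simp: kernel_weight_def)
  consider "z < 1" "e < 1" | "z < 1" "e > 1" | "z > 1" "e < 1" | "z > 1" "e > 1"
    using z e by linarith
  then show ?thesis
  proof cases
    case 1
    then have "Psi z e \<le> k * (z powr (-\<beta>) * e powr (-\<beta>))"
      using small[of z e] z e by (simp add: powr_mult)
    also have "\<dots> \<le> k * (kernel_weight \<beta> z * kernel_weight \<beta> e)"
      using kpos w z e by (intro mult_left_mono mult_mono) auto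
    finally show ?thesis by simp
  next
    case 2
    then have "Psi z e \<le> k * (z powr (-\<beta>) * e)"
      using mixed[of z e] z e by (simp add: algebra_simps)
    also have "\<dots> \<le> k * (kernel_weight \<beta> z * kernel_weight \<beta> e)"
      using kpos w z e by (intro mult_left_mono mult_mono) auto
    finally show ?thesis by simp
  next
    case 3
    then have "Psi z e \<le> k * (z * e powr (-\<beta>))"
      using mixed[of e z] z e sym by (simp add: algebra_simps)
    also have "\<dots> \<le> k * (kernel_weight \<beta> z * kernel_weight \<beta> e)"
      using kpos w z e by (intro mult_left_mono mult_mono) auto
    finally show ?thesis by simp
  next
    case 4
    then have "Psi z e \<le> k * (z + e)" using large by auto
    also have "z + e \<le> (z + 1) * (e + 1)" using z e by (simp add: algebra_simps)
    also have "\<dots> \<le> kernel_weight \<beta> z * kernel_weight \<beta> e"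
      using w z e by (intro mult_mono) (auto simp: kernel_weight_def)
    finally show ?thesis using kpos by simp
  qed
qed

text \<open>\<open>Psi\<close> is only assumed measurable on the open quadrant, so the pair integrals are
  handled through its restriction to it.\<close>

definition quadrant_kernel :: "(real \<Rightarrow> real \<Rightarrow> real) \<Rightarrow> real \<Rightarrow> real \<Rightarrow> real" where
  "quadrant_kernel Psi z e = (if 0 < z \<and> 0 < e then Psi z e else 0)"

lemma quadrant_kernel_measurable:
  assumes "kernel_assms Psi \<beta> k"
  shows "(\<lambda>(z, e). quadrant_kernel Psi z e) \<in> borel_measurable borel"
proof -
  have "(\<lambda>(z, e). quadrant_kernel Psi z e) =
        (\<lambda>x. indicator ({0<..} \<times> {0<..}) x *\<^sub>R (case x of (z, e) \<Rightarrow> Psi z e))"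
    by (auto simp: quadrant_kernel_def fun_eq_iff indicator_def)
  then show ?thesis
    using assms unfolding kernel_assms_def set_borel_measurable_def by simp
qed

lemma measurable_uncurried_compose:
  fixes f :: "real \<Rightarrow> real \<Rightarrow> real"
  assumes "(\<lambda>(x, y). f x y) \<in> borel_measurable borel"
    and "h \<in> borel_measurable M" "h' \<in> borel_measurable M"
  shows "(\<lambda>x. f (h x) (h' x)) \<in> borel_measurable M"
proof -
  have "(\<lambda>x. (h x, h' x)) \<in> measurable M borel"
    using assms(2,3) by (simp add: borel_prod[symmetric])
  from measurable_compose[OF this assms(1)] show ?thesis by simp
qed

lemma pred_in_atLeastAtMost [measurable]:
  fixes a b :: "'a \<Rightarrow> real"
  assumes [measurable]: "a \<in> borel_measurable M" "b \<in> borel_measurable M"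
  shows "Measurable.pred M (\<lambda>x. a x \<in> {b x..c})"
  by (simp add: atLeastAtMost_iff) measurable

lemma integral_cong_except_point:
  fixes f g :: "real \<Rightarrow> real"
  assumes "f \<in> borel_measurable lborel" "\<And>x. x \<noteq> c \<Longrightarrow> f x = g x"
  shows "integral\<^sup>L lborel f = integral\<^sup>L lborel g"
proof -
  have "g \<in> borel_measurable lborel"
    by (rule measurable_discrete_difference[where X="{c}", OF assms(1)]) (auto simp: assms(2))
  then show ?thesis
    by (intro integral_cong_AE assms(1)) (use AE_lborel_singleton[of c] assms(2) in auto)
qed

definition coag_gain :: "(real \<Rightarrow> real \<Rightarrow> real) \<Rightarrow> (real \<Rightarrow> real) \<Rightarrow> real \<Rightarrow> real" where
  "coag_gain P G q = (LINT z:{0<..q}|lborel. LINT e:{q - z..q}|lborel. P z e * G z * G e)"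

definition coag_loss :: "(real \<Rightarrow> real \<Rightarrow> real) \<Rightarrow> (real \<Rightarrow> real) \<Rightarrow> real \<Rightarrow> real" where
  "coag_loss P G q = (LINT z:{q..}|lborel. LINT e:{q..}|lborel. P z e * G z * G e)"

lemma tail_moment_tendsto_zero:
  fixes f :: "real \<Rightarrow> real"
  assumes fm [measurable]: "f \<in> borel_measurable lborel"
    and moment: "set_integrable lborel {0<..} (\<lambda>z. z * f z)"
  shows "((\<lambda>q. q * (LINT z:{q..}|lborel. f z)) \<longlongrightarrow> 0) at_top"
proof -
  define X where "X z = indicator {0<..} z * \<bar>z * f z\<bar>" for z
  have X_int: "integrable lborel X"
    using set_integrable_abs[OF moment] unfolding X_def set_integrable_def by simp
  have X_nonneg: "0 \<le> X z" for z
    unfolding X_def by simp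
  define D where "D q = (\<integral>z. indicator {q..} z * X z \<partial>lborel)" for q
  have "((\<lambda>q. \<integral>z. indicator {q..} z * X z \<partial>lborel) \<longlongrightarrow> integral\<^sup>L lborel (\<lambda>_::real. 0::real)) at_top"
  proof (rule integral_dominated_convergence_at_top[where w=X])
    show "AE z in lborel. ((\<lambda>q. indicator {q..} z * X z) \<longlongrightarrow> 0) at_top"
    proof (intro AE_I2 tendsto_eventually)
      show "\<forall>\<^sub>F q in at_top. indicator {q..} z * X z = 0" for z :: real
        using eventually_gt_at_top[of z] by eventually_elim (simp add: indicator_def)
    qed
    show "\<forall>\<^sub>F q in at_top. AE z in lborel. norm (indicator {q..} z * X z) \<le> X z"
      by (intro always_eventually allI AE_I2) (auto simp: indicator_def X_nonneg)
  qed (auto simp: X_def X_int)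
  then have D_lim: "(D \<longlongrightarrow> 0) at_top"
    unfolding D_def by simp
  have "\<bar>q * (LINT z:{q..}|lborel. f z)\<bar> \<le> D q" if q: "q > 0" for q
  proof -
    have "q * (LINT z:{q..}|lborel. f z) = (\<integral>z. indicator {q..} z * (q * f z) \<partial>lborel)"
      unfolding set_lebesgue_integral_def integral_mult_right_zero[symmetric]
      by (simp add: algebra_simps)
    also have "\<bar>\<dots>\<bar> \<le> (\<integral>z. \<bar>indicator {q..} z * (q * f z)\<bar> \<partial>lborel)"
      by (rule integral_abs_bound)
    also have "\<dots> \<le> D q"
      unfolding D_def
    proof (rule integral_mono')
      show "integrable lborel (\<lambda>z. indicator {q..} z * X z)"
        by (rule Bochner_Integration.integrable_bound[OF X_int])
           (auto simp: X_def indicator_def)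
      show "\<bar>indicator {q..} z * (q * f z)\<bar> \<le> indicator {q..} z * X z" for z
        using q by (auto simp: indicator_def X_def abs_mult intro: mult_right_mono)
    qed (simp add: X_nonneg)
    finally show ?thesis .
  qed
  then show ?thesis
    by (intro Lim_null_comparison[OF _ D_lim] eventually_mono[OF eventually_gt_at_top[of 0]]) auto
qed

lemma in_L1w_moment_integrable:
  assumes "in_L1w \<beta> f"
  shows "set_integrable lborel {0<..} (\<lambda>z. z * f z)"
proof (rule set_integrable_bound)
  show "set_integrable lborel {0<..} (\<lambda>z. f z * (z powr (-2 * \<beta>) + z))"
    using assms unfolding in_L1w_def by blast
  show "set_borel_measurable lborel {0<..} (\<lambda>z. z * f z)"
  proof -
    have [measurable]: "f \<in> borel_measurable borel"
      using assms unfolding in_L1w_def by simp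
    show ?thesis unfolding set_borel_measurable_def by measurable
  qed
  show "AE z in lborel. z \<in> {0<..} \<longrightarrow> norm (z * f z) \<le> norm (f z * (z powr (-2 * \<beta>) + z))"
  proof (intro AE_I2 impI)
    fix z :: real assume "z \<in> {0<..}"
    then show "norm (z * f z) \<le> norm (f z * (z powr (-2 * \<beta>) + z))"
      using mult_left_mono[of z "z powr (-2 * \<beta>) + z" "\<bar>f z\<bar>"] by (simp add: abs_mult mult.commute)
  qed
qed

locale coag_slice =
  fixes P :: "real \<Rightarrow> real \<Rightarrow> real" and \<beta> k :: real and G :: "real \<Rightarrow> real"
  assumes P_measurable: "(\<lambda>(z, e). P z e) \<in> borel_measurable borel"
    and P_nonneg: "\<And>z e. 0 \<le> P z e"
    and P_outside: "\<And>z e. \<not> (0 < z \<and> 0 < e) \<Longrightarrow> P z e = 0"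
    and P_bound: "\<And>z e. 0 < z \<Longrightarrow> 0 < e \<Longrightarrow> z \<noteq> 1 \<Longrightarrow> e \<noteq> 1 \<Longrightarrow>
                    P z e \<le> k * kernel_weight \<beta> z * kernel_weight \<beta> e"
    and \<beta>_pos: "\<beta> > 0" and k_pos: "k > 0"
    and G_measurable: "G \<in> borel_measurable borel"
    and G_nonneg: "\<And>z. 0 < z \<Longrightarrow> 0 \<le> G z"
    and G_weighted_integrable: "set_integrable lborel {0<..} (\<lambda>z. G z * (z powr (-2*\<beta>) + z))"
begin

lemmas P_compose_measurable [measurable (raw)] = measurable_uncurried_compose[OF P_measurable]
lemmas G_compose_measurable [measurable (raw)] = measurable_compose[OF _ G_measurable]

definition kernel_mass :: real where
  "kernel_mass = (LINT z:{0<..}|lborel. kernel_weight \<beta> z * G z)"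

lemma weighted_G_nonneg: "0 < z \<Longrightarrow> 0 \<le> G z * (z powr (-2*\<beta>) + z)"
  using G_nonneg[of z] by simp

lemma kernel_weight_G_nonneg: "0 < z \<Longrightarrow> 0 \<le> kernel_weight \<beta> z * G z"
  using kernel_weight_ge_1[of z \<beta>] G_nonneg[of z] by simp

lemma kernel_weight_G_le: "0 < z \<Longrightarrow> kernel_weight \<beta> z * G z \<le> 3 * (G z * (z powr (-2*\<beta>) + z))"
  using mult_right_mono[OF kernel_weight_le[OF \<beta>_pos] G_nonneg, of z] by (simp add: ac_simps)

lemma kernel_weight_G_integrable: "set_integrable lborel {0<..} (\<lambda>z. kernel_weight \<beta> z * G z)"
proof (rule set_integrable_bound)
  show "set_integrable lborel {0<..} (\<lambda>z. 3 * (G z * (z powr (-2*\<beta>) + z)))"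
    using G_weighted_integrable by simp
  show "set_borel_measurable lborel {0<..} (\<lambda>z. kernel_weight \<beta> z * G z)"
    unfolding set_borel_measurable_def kernel_weight_def by measurable
  show "AE z in lborel. z \<in> {0<..} \<longrightarrow>
          norm (kernel_weight \<beta> z * G z) \<le> norm (3 * (G z * (z powr (-2*\<beta>) + z)))"
    using kernel_weight_G_le kernel_weight_G_nonneg weighted_G_nonneg by (intro AE_I2) auto
qed

lemma kernel_mass_nonneg: "0 \<le> kernel_mass"
  unfolding kernel_mass_def set_lebesgue_integral_def
  using kernel_weight_G_nonneg by (intro integral_nonneg_AE AE_I2) (simp add: indicator_def)

lemma kernel_mass_le_wnorm: "kernel_mass \<le> 3 * wnorm \<beta> G"
proof -
  have "kernel_mass \<le> (LINT z:{0<..}|lborel. 3 * (G z * (z powr (-2*\<beta>) + z)))"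
    unfolding kernel_mass_def
    using kernel_weight_G_integrable G_weighted_integrable kernel_weight_G_le
    by (intro set_integral_mono) auto
  also have "\<dots> = 3 * wnorm \<beta> G"
    unfolding wnorm_def using G_nonneg
    by (simp add: set_lebesgue_integral_cong)
  finally show ?thesis .
qed

lemma inner_integral_bound:
  assumes z: "0 < z" "z \<noteq> 1"
  shows "\<bar>LINT e:S|lborel. P z e * G z * G e\<bar> \<le> k * kernel_mass * (kernel_weight \<beta> z * G z)"
proof -
  define c where "c = k * (kernel_weight \<beta> z * G z)"
  have "\<bar>LINT e:S|lborel. P z e * G z * G e\<bar> \<le> (\<integral>e. \<bar>indicator S e * (P z e * G z * G e)\<bar> \<partial>lborel)"
    unfolding set_lebesgue_integral_def by (simp add: integral_abs_bound)
  also have "\<dots> \<le> (\<integral>e. c * (indicator {0<..} e * (kernel_weight \<beta> e * G e)) \<partial>lborel)"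
  proof (rule integral_mono_AE')
    show "integrable lborel (\<lambda>e. c * (indicator {0<..} e * (kernel_weight \<beta> e * G e)))"
      using kernel_weight_G_integrable unfolding set_integrable_def by simp
    show "AE e in lborel. \<bar>indicator S e * (P z e * G z * G e)\<bar>
            \<le> c * (indicator {0<..} e * (kernel_weight \<beta> e * G e))"
      using AE_lborel_singleton[of 1]
    proof eventually_elim
      case (elim e)
      show ?case
      proof (cases "e > 0")
        case True
        have "\<bar>indicator S e * (P z e * G z * G e)\<bar> \<le> P z e * G z * G e"
          using P_nonneg G_nonneg z True by (auto simp: indicator_def)
        also have "\<dots> \<le> (k * kernel_weight \<beta> z * kernel_weight \<beta> e) * G z * G e"
          using P_bound[OF z(1) True z(2) elim] G_nonneg z True by (intro mult_right_mono) auto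
        finally show ?thesis
          using True by (simp add: c_def ac_simps)
      qed (simp add: P_outside)
    qed
    show "AE e in lborel. 0 \<le> c * (indicator {0<..} e * (kernel_weight \<beta> e * G e))"
      using k_pos kernel_weight_G_nonneg z unfolding c_def
      by (intro AE_I2) (auto simp: indicator_def)
  qed
  also have "\<dots> = c * kernel_mass"
    unfolding kernel_mass_def set_lebesgue_integral_def by simp
  finally show ?thesis
    by (simp add: c_def ac_simps)
qed

lemma outer_integral_bound:
  assumes meas: "(\<lambda>z. indicator A z * I z) \<in> borel_measurable borel"
    and A: "A \<subseteq> {0<..}"
    and bound: "\<And>z. z \<in> A \<Longrightarrow> z \<noteq> 1 \<Longrightarrow> \<bar>I z\<bar> \<le> k * kernel_mass * (kernel_weight \<beta> z * G z)"
  shows "set_integrable lborel A I" "\<bar>LINT z:A|lborel. I z\<bar> \<le> k * kernel_mass\<^sup>2"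
proof -
  define f where "f z = k * kernel_mass * (indicator {0<..} z * (kernel_weight \<beta> z * G z))" for z
  have f_int: "integrable lborel f"
    using kernel_weight_G_integrable unfolding f_def set_integrable_def by simp
  have f_nonneg: "0 \<le> f z" for z
    using k_pos kernel_mass_nonneg kernel_weight_G_nonneg[of z] unfolding f_def
    by (auto simp: indicator_def)
  have dominated: "AE z in lborel. \<bar>indicator A z * I z\<bar> \<le> f z"
    using AE_lborel_singleton[of 1]
  proof eventually_elim
    case (elim z)
    show ?case
      using bound[OF _ elim] A f_nonneg[of z] by (cases "z \<in> A") (auto simp: f_def)
  qed
  show "set_integrable lborel A I"
    unfolding set_integrable_def
    by (rule Bochner_Integration.integrable_bound[OF f_int]) (use meas dominated in auto)
  have "\<bar>LINT z:A|lborel. I z\<bar> \<le> (\<integral>z. \<bar>indicator A z * I z\<bar> \<partial>lborel)"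
    unfolding set_lebesgue_integral_def by (simp add: integral_abs_bound)
  also have "\<dots> \<le> integral\<^sup>L lborel f"
    by (rule integral_mono_AE'[OF f_int dominated]) (simp add: f_nonneg)
  also have "\<dots> = k * kernel_mass\<^sup>2"
    unfolding f_def kernel_mass_def set_lebesgue_integral_def by (simp add: power2_eq_square)
  finally show "\<bar>LINT z:A|lborel. I z\<bar> \<le> k * kernel_mass\<^sup>2" .
qed

lemma coag_gain_bound: "\<bar>coag_gain P G q\<bar> \<le> k * kernel_mass\<^sup>2"
  unfolding coag_gain_def
proof (rule outer_integral_bound(2))
  show "(\<lambda>z. indicator {0<..q} z * (LINT e:{q - z..q}|lborel. P z e * G z * G e)) \<in> borel_measurable borel"
    unfolding set_lebesgue_integral_def by measurable
qed (auto intro!: inner_integral_bound)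

lemma coag_loss_bound:
  assumes "q > 0"
  shows "\<bar>coag_loss P G q\<bar> \<le> k * kernel_mass\<^sup>2"
  unfolding coag_loss_def
proof (rule outer_integral_bound(2))
  show "(\<lambda>z. indicator {q..} z * (LINT e:{q..}|lborel. P z e * G z * G e)) \<in> borel_measurable borel"
    unfolding set_lebesgue_integral_def by measurable
qed (use assms in \<open>auto intro!: inner_integral_bound\<close>)

lemma coag_gain_integrand_integrable:
  "set_integrable lborel {0<..q} (\<lambda>z. LINT e:{q - z..q}|lborel. P z e * G z * G e)"
proof (rule outer_integral_bound(1))
  show "(\<lambda>z. indicator {0<..q} z * (LINT e:{q - z..q}|lborel. P z e * G z * G e)) \<in> borel_measurable borel"
    unfolding set_lebesgue_integral_def by measurable
qed (auto intro!: inner_integral_bound)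

lemma coag_loss_integrand_integrable:
  assumes "q > 0"
  shows "set_integrable lborel {q..} (\<lambda>z. LINT e:{q..}|lborel. P z e * G z * G e)"
proof (rule outer_integral_bound(1))
  show "(\<lambda>z. indicator {q..} z * (LINT e:{q..}|lborel. P z e * G z * G e)) \<in> borel_measurable borel"
    unfolding set_lebesgue_integral_def by measurable
qed (use assms in \<open>auto intro!: inner_integral_bound\<close>)

lemma indicator_test_eq_gain_minus_loss:
  assumes q: "q > 0"
  shows "(LINT z:{0<..}|lborel. LINT e:{0<..}|lborel.
            (indicator {q..} (z + e) - indicator {q..} z - indicator {q..} e) * P z e * G z * G e)
       = coag_gain P G q - coag_loss P G q"
proof -
  define gain where "gain z = (LINT e:{q - z..q}|lborel. P z e * G z * G e)" for z
  define loss where "loss z = (LINT e:{q..}|lborel. P z e * G z * G e)" for z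
  have split: "indicator {0<..} z *\<^sub>R (LINT e:{0<..}|lborel.
                 (indicator {q..} (z + e) - indicator {q..} z - indicator {q..} e) * P z e * G z * G e)
             = indicator {0<..q} z * gain z - indicator {q..} z * loss z" if "z \<noteq> q" for z
  proof -
    consider "z \<le> 0" | "0 < z" "z < q" | "q < z"
      using \<open>z \<noteq> q\<close> by linarith
    then show ?thesis
    proof cases
      case 1
      then show ?thesis using q by (simp add: indicator_def)
    next
      case 2
      have "(LINT e:{0<..}|lborel.
              (indicator {q..} (z + e) - indicator {q..} z - indicator {q..} e) * P z e * G z * G e) = gain z"
        unfolding gain_def set_lebesgue_integral_def
        by (rule integral_cong_except_point[where c=q]) (use 2 in \<open>auto simp: indicator_def\<close>)
      then show ?thesis using 2 by simp
    next
      case 3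
      have "(LINT e:{0<..}|lborel.
              (indicator {q..} (z + e) - indicator {q..} z - indicator {q..} e) * P z e * G z * G e) = - loss z"
        unfolding loss_def set_lebesgue_integral_def integral_minus[symmetric]
        by (rule Bochner_Integration.integral_cong) (use 3 q in \<open>auto simp: indicator_def\<close>)
      then show ?thesis using 3 q by simp
    qed
  qed
  have "(LINT z:{0<..}|lborel. LINT e:{0<..}|lborel.
            (indicator {q..} (z + e) - indicator {q..} z - indicator {q..} e) * P z e * G z * G e)
      = (\<integral>z. indicator {0<..q} z * gain z - indicator {q..} z * loss z \<partial>lborel)"
    unfolding set_lebesgue_integral_def[of _ "{0<..}"]
    by (rule integral_cong_except_point[where c=q], measurable)
       (rule split[unfolded set_lebesgue_integral_def])
  also have "\<dots> = coag_gain P G q - coag_loss P G q"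
    using coag_gain_integrand_integrable coag_loss_integrand_integrable[OF q]
    unfolding coag_gain_def coag_loss_def gain_def loss_def set_integrable_def set_lebesgue_integral_def
    by simp
  finally show ?thesis .
qed

lemma coag_gain_cong_quadrant:
  assumes "\<And>z e. 0 < z \<Longrightarrow> 0 < e \<Longrightarrow> Psi z e = P z e"
  shows "coag_gain Psi G q = coag_gain P G q"
  unfolding coag_gain_def
proof (rule set_lebesgue_integral_cong)
  show "\<forall>z. z \<in> {0<..q} \<longrightarrow> (LINT e:{q - z..q}|lborel. Psi z e * G z * G e)
                                = (LINT e:{q - z..q}|lborel. P z e * G z * G e)"
  proof (intro allI impI)
    fix z :: real assume z: "z \<in> {0<..q}"
    show "(LINT e:{q - z..q}|lborel. Psi z e * G z * G e) = (LINT e:{q - z..q}|lborel. P z e * G z * G e)"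
      unfolding set_lebesgue_integral_def
      by (rule integral_cong_except_point[where c=0, symmetric]) (use z assms in \<open>auto simp: indicator_def\<close>)
  qed
qed simp

lemma coag_loss_cong_quadrant:
  assumes "\<And>z e. 0 < z \<Longrightarrow> 0 < e \<Longrightarrow> Psi z e = P z e" and "q > 0"
  shows "coag_loss Psi G q = coag_loss P G q"
  unfolding coag_loss_def
  using assms by (intro set_lebesgue_integral_cong allI impI) auto

end

locale coag_weak_solution =
  fixes Psi :: "real \<Rightarrow> real \<Rightarrow> real" and \<beta> k :: real and T :: ereal
    and gin :: "real \<Rightarrow> real" and g :: "real \<Rightarrow> real \<Rightarrow> real"
  assumes kernel: "kernel_assms Psi \<beta> k"
    and solution: "weak_solution Psi \<beta> T gin g"
begin

lemma g_measurable: "(\<lambda>(z, s). g z s) \<in> borel_measurable borel"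
  using solution unfolding weak_solution_def by blast

lemmas g_compose_measurable [measurable (raw)] = measurable_uncurried_compose[OF g_measurable]
lemmas quadrant_kernel_compose_measurable [measurable (raw)] =
  measurable_uncurried_compose[OF quadrant_kernel_measurable[OF kernel]]

lemma Psi_eq_quadrant_kernel: "0 < z \<Longrightarrow> 0 < e \<Longrightarrow> Psi z e = quadrant_kernel Psi z e"
  by (simp add: quadrant_kernel_def)

lemma coag_slice_at:
  assumes s: "0 \<le> s" "ereal s < T"
  shows "coag_slice (quadrant_kernel Psi) \<beta> k (\<lambda>z. g z s)"
proof
  show "(\<lambda>(z, e). quadrant_kernel Psi z e) \<in> borel_measurable borel"
    by (rule quadrant_kernel_measurable[OF kernel])
  show "0 \<le> quadrant_kernel Psi z e" for z e
    using kernel unfolding quadrant_kernel_def kernel_assms_def by auto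
  show "\<not> (0 < z \<and> 0 < e) \<Longrightarrow> quadrant_kernel Psi z e = 0" for z e
    by (auto simp: quadrant_kernel_def)
  show "quadrant_kernel Psi z e \<le> k * kernel_weight \<beta> z * kernel_weight \<beta> e"
    if "0 < z" "0 < e" "z \<noteq> 1" "e \<noteq> 1" for z e
    using kernel_le_kernel_weight[OF kernel] that by (simp add: quadrant_kernel_def)
  show "\<beta> > 0" "k > 0"
    using kernel unfolding kernel_assms_def by auto
  show "(\<lambda>z. g z s) \<in> borel_measurable borel"
    by measurable
  show "0 < z \<Longrightarrow> 0 \<le> g z s" for z
    using solution s unfolding weak_solution_def by blast
  show "set_integrable lborel {0<..} (\<lambda>z. g z s * (z powr (-2*\<beta>) + z))"
    using solution s unfolding weak_solution_def in_L1w_def by blast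
qed

lemma coag_gain_loss_quadrant:
  assumes "0 \<le> s" "ereal s < T" "q > 0"
  shows "coag_gain Psi (\<lambda>z. g z s) q = coag_gain (quadrant_kernel Psi) (\<lambda>z. g z s) q"
    and "coag_loss Psi (\<lambda>z. g z s) q = coag_loss (quadrant_kernel Psi) (\<lambda>z. g z s) q"
  using coag_slice.coag_gain_cong_quadrant[OF coag_slice_at] coag_slice.coag_loss_cong_quadrant[OF coag_slice_at]
    Psi_eq_quadrant_kernel assms by blast+

lemma coag_gain_loss_bounded:
  obtains B where "\<And>s q. 0 \<le> s \<Longrightarrow> ereal s < T \<Longrightarrow> q > 0 \<Longrightarrow>
                     \<bar>coag_gain (quadrant_kernel Psi) (\<lambda>z. g z s) q\<bar> \<le> B \<and>
                     \<bar>coag_loss (quadrant_kernel Psi) (\<lambda>z. g z s) q\<bar> \<le> B"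
proof -
  obtain C where C: "\<And>s. 0 \<le> s \<Longrightarrow> ereal s < T \<Longrightarrow> wnorm \<beta> (\<lambda>z. g z s) \<le> C"
    using solution unfolding weak_solution_def by blast
  show thesis
  proof (rule that[of "k * (3 * C)\<^sup>2"])
    fix s q :: real assume s: "0 \<le> s" "ereal s < T" and q: "q > 0"
    interpret coag_slice "quadrant_kernel Psi" \<beta> k "\<lambda>z. g z s"
      by (rule coag_slice_at[OF s])
    have "kernel_mass\<^sup>2 \<le> (3 * C)\<^sup>2"
      using kernel_mass_nonneg kernel_mass_le_wnorm C[OF s] by (intro power_mono) auto
    then have "k * kernel_mass\<^sup>2 \<le> k * (3 * C)\<^sup>2"
      using k_pos by simp
    then show "\<bar>coag_gain (quadrant_kernel Psi) (\<lambda>z. g z s) q\<bar> \<le> k * (3 * C)\<^sup>2 \<and>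
               \<bar>coag_loss (quadrant_kernel Psi) (\<lambda>z. g z s) q\<bar> \<le> k * (3 * C)\<^sup>2"
      using coag_gain_bound[of q] coag_loss_bound[OF q] by linarith
  qed
qed

lemma coag_gain_loss_time_integrable:
  assumes t: "ereal t < T" and q: "q > 0"
  shows "set_integrable lborel {0..t} (\<lambda>s. coag_gain Psi (\<lambda>z. g z s) q)"
    and "set_integrable lborel {0..t} (\<lambda>s. coag_loss Psi (\<lambda>z. g z s) q)"
proof -
  have sT: "ereal s < T" if "s \<in> {0..t}" for s
    using that t by (meson atLeastAtMost_iff ereal_less_eq(3) order.strict_trans1)
  obtain B where B: "\<And>s. s \<in> {0..t} \<Longrightarrow>
      \<bar>coag_gain (quadrant_kernel Psi) (\<lambda>z. g z s) q\<bar> \<le> B \<and>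
      \<bar>coag_loss (quadrant_kernel Psi) (\<lambda>z. g z s) q\<bar> \<le> B"
    using coag_gain_loss_bounded sT q by (metis atLeastAtMost_iff)
  have "set_integrable lborel {0..t} (\<lambda>s. coag_gain (quadrant_kernel Psi) (\<lambda>z. g z s) q)"
    unfolding set_integrable_def
    by (rule integrableI_bounded_set_indicator[where B=B])
       (use B in \<open>auto simp: coag_gain_def set_lebesgue_integral_def emeasure_lborel_Icc_eq\<close>)
  then show "set_integrable lborel {0..t} (\<lambda>s. coag_gain Psi (\<lambda>z. g z s) q)"
    using coag_gain_loss_quadrant(1) sT q by (subst set_integrable_cong) auto
  have "set_integrable lborel {0..t} (\<lambda>s. coag_loss (quadrant_kernel Psi) (\<lambda>z. g z s) q)"
    unfolding set_integrable_def
    by (rule integrableI_bounded_set_indicator[where B=B])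
       (use B in \<open>auto simp: coag_loss_def set_lebesgue_integral_def emeasure_lborel_Icc_eq\<close>)
  then show "set_integrable lborel {0..t} (\<lambda>s. coag_loss Psi (\<lambda>z. g z s) q)"
    using coag_gain_loss_quadrant(2) sT q by (subst set_integrable_cong) auto
qed

lemma indicator_test_eq_gain_minus_loss_at:
  assumes s: "0 \<le> s" "ereal s < T" and q: "q > 0"
  shows "(LINT z:{0<..}|lborel. LINT e:{0<..}|lborel.
            (indicator {q..} (z + e) - indicator {q..} z - indicator {q..} e) * Psi z e * g z s * g e s)
       = coag_gain Psi (\<lambda>z. g z s) q - coag_loss Psi (\<lambda>z. g z s) q"
proof -
  interpret coag_slice "quadrant_kernel Psi" \<beta> k "\<lambda>z. g z s"
    by (rule coag_slice_at[OF s])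
  have "(LINT z:{0<..}|lborel. LINT e:{0<..}|lborel.
          (indicator {q..} (z + e) - indicator {q..} z - indicator {q..} e) * Psi z e * g z s * g e s)
      = (LINT z:{0<..}|lborel. LINT e:{0<..}|lborel.
          (indicator {q..} (z + e) - indicator {q..} z - indicator {q..} e) * quadrant_kernel Psi z e * g z s * g e s)"
    by (intro set_lebesgue_integral_cong allI impI) (auto simp: Psi_eq_quadrant_kernel)
  then show ?thesis
    using indicator_test_eq_gain_minus_loss[OF q] coag_gain_loss_quadrant[OF s q] by simp
qed

lemma tail_identity:
  assumes t: "0 < t" "ereal t < T" and q: "q > 0"
  shows "(LINT z:{q..}|lborel. g z t - gin z)
       = 1/2 * ((LINT s:{0..t}|lborel. coag_gain Psi (\<lambda>z. g z s) q)
              - (LINT s:{0..t}|lborel. coag_loss Psi (\<lambda>z. g z s) q))"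
proof -
  have "\<exists>M. \<forall>x>0. \<bar>indicator {q..} x :: real\<bar> \<le> M"
    by (intro exI[of _ 1]) (simp add: indicator_def)
  then have "(LINT z:{0<..}|lborel. (g z t - gin z) * indicator {q..} z) =
        1/2 * (LINT s:{0..t}|lborel. LINT z:{0<..}|lborel. LINT e:{0<..}|lborel.
           (indicator {q..} (z + e) - indicator {q..} z - indicator {q..} e) * Psi z e * g z s * g e s)"
    using solution t unfolding weak_solution_def by simp
  also have "(LINT z:{0<..}|lborel. (g z t - gin z) * indicator {q..} z) = (LINT z:{q..}|lborel. g z t - gin z)"
    unfolding set_lebesgue_integral_def
    by (rule Bochner_Integration.integral_cong) (use q in \<open>auto simp: indicator_def\<close>)
  also have "(LINT s:{0..t}|lborel. LINT z:{0<..}|lborel. LINT e:{0<..}|lborel.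
           (indicator {q..} (z + e) - indicator {q..} z - indicator {q..} e) * Psi z e * g z s * g e s)
      = (LINT s:{0..t}|lborel. coag_gain Psi (\<lambda>z. g z s) q - coag_loss Psi (\<lambda>z. g z s) q)"
    using q by (intro set_lebesgue_integral_cong allI impI indicator_test_eq_gain_minus_loss_at)
               (auto intro: order.strict_trans1[OF _ t(2)])
  also have "\<dots> = (LINT s:{0..t}|lborel. coag_gain Psi (\<lambda>z. g z s) q)
                - (LINT s:{0..t}|lborel. coag_loss Psi (\<lambda>z. g z s) q)"
    using coag_gain_loss_time_integrable[OF t(2) q] by simp
  finally show ?thesis .
qed

lemma flux_integral_eq_tail:
  assumes "0 < t" "ereal t < T" "q > 0"
  shows "(LINT s:{0..t}|lborel. q * (coag_gain Psi (\<lambda>z. g z s) q - coag_loss Psi (\<lambda>z. g z s) q))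
       = 2 * (q * (LINT z:{q..}|lborel. g z t - gin z))"
  using tail_identity[OF assms] coag_gain_loss_time_integrable[OF assms(2,3)] by simp

lemma tail_moment_at_tendsto_zero:
  assumes gin: "in_L1w \<beta> gin" and t: "0 \<le> t" "ereal t < T"
  shows "((\<lambda>q. q * (LINT z:{q..}|lborel. g z t - gin z)) \<longlongrightarrow> 0) at_top"
proof (rule tail_moment_tendsto_zero)
  have gt: "in_L1w \<beta> (\<lambda>z. g z t)"
    using solution t unfolding weak_solution_def by simp
  then show "(\<lambda>z. g z t - gin z) \<in> borel_measurable lborel"
    using gin unfolding in_L1w_def by (auto intro: borel_measurable_diff)
  show "set_integrable lborel {0<..} (\<lambda>z. z * (g z t - gin z))"
    using set_integral_diff(1)[OF in_L1w_moment_integrable[OF gt] in_L1w_moment_integrable[OF gin]]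
    by (simp add: right_diff_distrib)
qed

end

theorem lemma3p2:
  fixes Psi :: "real \<Rightarrow> real \<Rightarrow> real" and \<beta> k :: real and T :: ereal
    and gin :: "real \<Rightarrow> real" and g :: "real \<Rightarrow> real \<Rightarrow> real" and t :: real
  assumes "kernel_assms Psi \<beta> k"
    and "T > 0"
    and "in_L1w \<beta> gin" and "\<forall>z>0. gin z \<ge> 0"
    and "weak_solution Psi \<beta> T gin g"
    and "0 < t" and "ereal t < T"
  shows "(\<forall>q>0.
           (\<integral>z\<in>{q..}. (g z t - gin z) \<partial>lborel) =
             - 1/2 * (\<integral>s\<in>{0..t}. (\<integral>z\<in>{q..}. (\<integral>e\<in>{q..}.
                   Psi z e * g z s * g e s \<partial>lborel) \<partial>lborel) \<partial>lborel)
             + 1/2 * (\<integral>s\<in>{0..t}. (\<integral>z\<in>{0<..q}. (\<integral>e\<in>{q - z..q}.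
                   Psi z e * g z s * g e s \<partial>lborel) \<partial>lborel) \<partial>lborel))
       \<and> ((\<lambda>q. \<integral>s\<in>{0..t}. q *
              ((\<integral>z\<in>{0<..q}. (\<integral>e\<in>{q - z..q}. Psi z e * g z s * g e s \<partial>lborel) \<partial>lborel)
             - (\<integral>z\<in>{q..}. (\<integral>e\<in>{q..}. Psi z e * g z s * g e s \<partial>lborel) \<partial>lborel)) \<partial>lborel)
           \<longlongrightarrow> 0) at_top"
proof -
  interpret coag_weak_solution Psi \<beta> k T gin g
    using assms(1,5) by unfold_locales
  have "((\<lambda>q. 2 * (q * (LINT z:{q..}|lborel. g z t - gin z))) \<longlongrightarrow> 0) at_top"
    using tail_moment_at_tendsto_zero[OF assms(3) less_imp_le[OF assms(6)] assms(7)]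
    by (rule tendsto_mult_right_zero)
  then have "((\<lambda>q. LINT s:{0..t}|lborel. q * (coag_gain Psi (\<lambda>z. g z s) q - coag_loss Psi (\<lambda>z. g z s) q))
              \<longlongrightarrow> 0) at_top"
  proof (rule Lim_transform_eventually)
    show "\<forall>\<^sub>F q in at_top. 2 * (q * (LINT z:{q..}|lborel. g z t - gin z))
            = (LINT s:{0..t}|lborel. q * (coag_gain Psi (\<lambda>z. g z s) q - coag_loss Psi (\<lambda>z. g z s) q))"
      using eventually_gt_at_top[of 0]
      by eventually_elim (simp only: flux_integral_eq_tail[OF assms(6,7)])
  qed
  with tail_identity[OF assms(6,7)] show ?thesis
    unfolding coag_gain_def coag_loss_def by (simp add: algebra_simps)
qed

end
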